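(* Suppose $F_L$ is supported on $[0,\bar L)$ and $F_H$ is supported on $[\underline H,\infty)$, with $\bar L<\underline H$. Suppose $\alpha_i=1$ for at least two agents $i$. Let $r_L<r_H$. Then for every $\rho\in(\bar L,\underline H)$, the threshold mechanism ${\cal M}(\rho,r_L,r_H)$ is incentive compatible. That is, for each agent $i$, each type $s$ and each $v_i$ in the support of $F_s$, the truthful strategy of agent $i$ is a best response when all other agents bid truthfully.
   Context: Setting: a seller sells $T>1$ items, one per round $t=1,\dots,T$, to $n$ agents. All items share a type $s\in\{L,H\}$, which has prior probabilities $p_L,p_H$. The type $s$ is known to the agents but not to the seller. Conditional on $s$, agent $i$'s valuation $v_i$ is drawn independently from $F_s$ and is the same in all rounds. In each round, agent $i$ participates independently with probability $\alpha_i$ and learns this at the start of the round. $T$, $p_L$, $p_H$ and the $\alpha_i$ are common knowledge. Each agent knows only its own valuation. Each round runs a second price auction with reserve $r_t$ among the participants: if all bids are below $r_t$ there is no sale; otherwise a highest bidder (ties broken uniformly at random) wins and pays the maximum of $r_t$ and the highest other bid. A bidding strategy for agent $i$ maps $v_i$, the agent's own observed history (past reserves, own participation, bids, allocations, payments) and the current reserve to a bid. Agent $i$'s utility is $\mathbb{E}[\sum_t (v_iq_{it}-p_{it})]$. The truthful strategy bids $v_i$ whenever participating. A best response maximizes this utility given the others' strategies. The threshold mechanism ${\cal M}(\rho,r_L,r_H)$ works as follows. The reserve is $r_L$ in round 1 and stays $r_L$ until some agent bids above $\rho$ in some round. In all rounds after that, the reserve is $r_H$. If no bid ever exceeds $\rho$,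 the reserve stays $r_L$ until round $T$. *)

theory Defs
  imports "HOL-Probability.Probability"
begin

datatype itype = L | H

text \<open>What agent i observes about one round: the reserve, whether it
participated, its own bid (None if absent), whether it was allocated the item,
and its payment.\<close>
datatype obs = Obs (obs_reserve: real) (obs_part: bool) (obs_bid: "real option")
                   (obs_won: bool) (obs_pay: real)

text \<open>A bidding strategy of an agent: own valuation, own observed history
(chronological list of past rounds), current reserve \<mapsto> bid.\<close>
type_synonym strategy = "real \<Rightarrow> obs list \<Rightarrow> real \<Rightarrow> real"

definition truthful :: strategy where
  "truthful = (\<lambda>v h r. v)"

definition support_of :: "real measure \<Rightarrow> real set" where
  "support_of M = {x. \<forall>e>0. emeasure M (ball x e) > 0}"

definition part_pmf :: "nat \<Rightarrow> (nat \<Rightarrow> real) \<Rightarrow> (nat \<Rightarrow> bool) pmf" where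
  "part_pmf n \<alpha> = Pi_pmf {..<n} False (\<lambda>j. bernoulli_pmf (\<alpha> j))"

text \<open>Second price auction with reserve r; bids b j = None means agent j does
not participate.\<close>
definition bidders :: "nat \<Rightarrow> (nat \<Rightarrow> real option) \<Rightarrow> nat set" where
  "bidders n b = {j. j < n \<and> b j \<noteq> None}"

definition winners :: "nat \<Rightarrow> real \<Rightarrow> (nat \<Rightarrow> real option) \<Rightarrow> nat set" where
  "winners n r b = {j \<in> bidders n b. r \<le> the (b j) \<and>
                      (\<forall>k \<in> bidders n b. the (b k) \<le> the (b j))}"

text \<open>Winner (None = no sale); ties broken uniformly at random.\<close>
definition winner_pmf :: "nat \<Rightarrow> real \<Rightarrow> (nat \<Rightarrow> real option) \<Rightarrow> nat option pmf" where
  "winner_pmf n r b = (if winners n r b = {} then return_pmf None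
                       else map_pmf Some (pmf_of_set (winners n r b)))"

definition price :: "nat \<Rightarrow> real \<Rightarrow> (nat \<Rightarrow> real option) \<Rightarrow> nat \<Rightarrow> real" where
  "price n r b w = Max (insert r {the (b k) | k. k \<in> bidders n b \<and> k \<noteq> w})"

definition above :: "nat \<Rightarrow> real \<Rightarrow> (nat \<Rightarrow> real option) \<Rightarrow> bool" where
  "above n \<rho> b = (\<exists>j \<in> bidders n b. the (b j) > \<rho>)"

text \<open>Play of the remaining k rounds of the threshold mechanism M(rho, rL, rH).
Agent i uses strategy sigma and has valuation v; every other agent j bids
truthfully its valuation w j.  flag records whether some bid has exceeded rho
in an earlier round; h is agent i's observed history.  The result is the
distribution of agent i's total utility over the remaining rounds.\<close>
primrec play :: "nat \<Rightarrow> (nat \<Rightarrow> real) \<Rightarrow> real \<Rightarrow> real \<Rightarrow> real \<Rightarrow> nat \<Rightarrow> real \<Rightarrow>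
                 strategy \<Rightarrow> (nat \<Rightarrow> real) \<Rightarrow> nat \<Rightarrow> bool \<Rightarrow> obs list \<Rightarrow> real pmf" where
  "play n \<alpha> \<rho> rL rH i v \<sigma> w 0 flag h = return_pmf 0"
| "play n \<alpha> \<rho> rL rH i v \<sigma> w (Suc k) flag h =
     bind_pmf (part_pmf n \<alpha>) (\<lambda>P.
       let r = (if flag then rH else rL);
           b = (\<lambda>j. if P j then Some (if j = i then \<sigma> v h r else w j) else None)
       in bind_pmf (winner_pmf n r b) (\<lambda>win.
            let q = (win = Some i);
                pay = (if q then price n r b i else 0);
                ob = Obs r (P i) (b i) q pay
            in map_pmf (\<lambda>u. (if q then v else 0) - pay + u)
                 (play n \<alpha> \<rho> rL rH i v \<sigma> w k (flag \<or> above n \<rho> b) (h @ [ob]))))"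

definition exp_util ::
  "nat \<Rightarrow> (nat \<Rightarrow> real) \<Rightarrow> (itype \<Rightarrow> real measure) \<Rightarrow> itype \<Rightarrow> nat \<Rightarrow>
   real \<Rightarrow> real \<Rightarrow> real \<Rightarrow> nat \<Rightarrow> real \<Rightarrow> strategy \<Rightarrow> real" where
  "exp_util n \<alpha> F s T \<rho> rL rH i v \<sigma> =
     (\<integral>w. measure_pmf.expectation (play n \<alpha> \<rho> rL rH i v \<sigma> w T False []) (\<lambda>u. u)
        \<partial>(PiM ({..<n} - {i}) (\<lambda>_. F s)))"

definition best_response ::
  "nat \<Rightarrow> (nat \<Rightarrow> real) \<Rightarrow> (itype \<Rightarrow> real measure) \<Rightarrow> itype \<Rightarrow> nat \<Rightarrow>
   real \<Rightarrow> real \<Rightarrow> real \<Rightarrow> nat \<Rightarrow> real \<Rightarrow> strategy \<Rightarrow> bool" where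
  "best_response n \<alpha> F s T \<rho> rL rH i v \<sigma> =
     (\<forall>\<sigma>'. exp_util n \<alpha> F s T \<rho> rL rH i v \<sigma>' \<le> exp_util n \<alpha> F s T \<rho> rL rH i v \<sigma>)"

end

theory Submission
  imports Defs
begin

text \<open>
  In a single round, given who participates and the rivals' truthful bids, the expected
  utility of agent \<open>i\<close> from any bid is at most \<open>max 0 (v - c)\<close>, where \<open>c\<close> is the larger of the
  reserve and the highest rival bid, and a truthful bid attains this bound: truthful bidding is
  dominant in a second price auction. A bid affects later rounds only through whether it lifts
  the reserve from \<open>rL\<close> to \<open>rH\<close>. For \<open>s = L\<close> all valuations lie below \<open>\<rho>\<close>, so truthful bidding
  never lifts the reserve, and a lifted reserve only lowers the later gains. For \<open>s = H\<close> some
  rival participates surely and bids above \<open>\<rho>\<close>, so the reserve is lifted whatever agent \<open>i\<close>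
  bids. Induction on the number of remaining rounds then shows, for almost every valuation
  profile of the rivals, that no strategy beats truthful bidding.
\<close>

lemma expectation_bind_pmf_finite:
  fixes f :: "'b \<Rightarrow> real"
  assumes "finite (set_pmf M)" and "\<And>x. x \<in> set_pmf M \<Longrightarrow> finite (set_pmf (N x))"
  shows "measure_pmf.expectation (bind_pmf M N) f =
         measure_pmf.expectation M (\<lambda>x. measure_pmf.expectation (N x) f)"
  using assms
  by (simp add: pmf_expectation_bind[OF assms(1,2) order.refl] integral_measure_pmf_real mult.commute)

lemma finite_set_pmf_bind_pmf:
  "finite (set_pmf M) \<Longrightarrow> (\<And>x. x \<in> set_pmf M \<Longrightarrow> finite (set_pmf (N x))) \<Longrightarrow>
     finite (set_pmf (bind_pmf M N))"
  by (simp add: set_bind_pmf)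

lemma expectation_add_const:
  fixes c :: real
  assumes "finite (set_pmf M)"
  shows "measure_pmf.expectation M (\<lambda>x. f x + c) = measure_pmf.expectation M f + c"
  using assms by (simp add: integrable_measure_pmf_finite)

lemma expectation_shift_pmf:
  fixes c :: real
  assumes "finite (set_pmf M)"
  shows "measure_pmf.expectation (map_pmf (\<lambda>u. c + u) M) (\<lambda>u. u) = c + measure_pmf.expectation M (\<lambda>u. u)"
  using assms by (simp add: integrable_measure_pmf_finite)

lemma borel_measurable_Max_insert:
  fixes r :: real
  assumes "finite K" and "\<And>k. k \<in> K \<Longrightarrow> (\<lambda>w. w k) \<in> borel_measurable M"
  shows "(\<lambda>w. Max (insert r (w ` K))) \<in> borel_measurable M"
proof -
  let ?g = "\<lambda>j. case j of None \<Rightarrow> (\<lambda>_. r) | Some k \<Rightarrow> (\<lambda>w. w k)"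
  have "(\<lambda>w. Max ((\<lambda>j. ?g j w) ` insert None (Some ` K))) \<in> borel_measurable M"
    using assms by (intro borel_measurable_Max) auto
  then show ?thesis by (simp add: image_image)
qed

lemma support_of_le:
  assumes "prob_space N" and "sets N = sets borel"
    and "measure N S = 1" and "S \<subseteq> {..b}" and "v \<in> support_of N"
  shows "v \<le> b"
proof (rule ccontr)
  assume "\<not> v \<le> b"
  interpret prob_space N by fact
  have S: "S \<in> events"
    using assms(3) measure_notin_sets by fastforce
  have "ball v (v - b) \<subseteq> space N - S"
    using assms(2,4) sets_eq_imp_space_eq[of N borel] by (auto simp: dist_real_def)
  then have "prob (ball v (v - b)) \<le> prob (space N - S)"
    using assms(2) S by (intro finite_measure_mono) auto
  also have "\<dots> = 0"
    using prob_compl[OF S] assms(3) by simp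
  finally have "emeasure N (ball v (v - b)) = 0"
    by (simp add: emeasure_eq_measure measure_le_0_iff)
  moreover have "emeasure N (ball v (v - b)) > 0"
    using assms(5) \<open>\<not> v \<le> b\<close> by (simp add: support_of_def)
  ultimately show False by simp
qed

lemma AE_PiM_all_in:
  assumes "prob_space N" and "finite I" and "measure N S = 1"
  shows "AE w in PiM I (\<lambda>_. N). \<forall>j\<in>I. w j \<in> S"
proof (rule AE_finite_allI[OF assms(2)])
  interpret prob_space N by fact
  have "AE x in N. x \<in> S"
    using assms(3) measure_notin_sets[of S N] by (subst AE_in_set_eq_1) fastforce+
  then show "AE w in PiM I (\<lambda>_. N). w j \<in> S" if "j \<in> I" for j
    using assms(1) that by (intro AE_PiM_component)
qed

lemma ex_neq_if_card_ge_2: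
  assumes "2 \<le> card A"
  shows "\<exists>a\<in>A. a \<noteq> x"
proof (rule ccontr)
  assume "\<not> (\<exists>a\<in>A. a \<noteq> x)"
  then have "card A \<le> card {x}"
    by (intro card_mono) auto
  with assms show False by simp
qed

lemma finite_set_pmf_part_pmf: "finite (set_pmf (part_pmf n \<alpha>))"
  unfolding part_pmf_def by (subst set_Pi_pmf) (auto intro!: finite_PiE_dflt)

lemma part_pmf_sure_participant:
  assumes "P \<in> set_pmf (part_pmf n \<alpha>)" and "j < n" and "\<alpha> j = 1"
  shows "P j"
proof -
  have "P j \<in> set_pmf (bernoulli_pmf 1)"
    using assms unfolding part_pmf_def by (auto simp: set_Pi_pmf PiE_dflt_def)
  then show ?thesis by (cases "P j") (auto simp: set_pmf_iff)
qed

lemma finite_winners: "finite (winners n r b)"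
  by (rule finite_subset[of _ "{..<n}"]) (auto simp: winners_def bidders_def)

lemma finite_set_pmf_winner_pmf: "finite (set_pmf (winner_pmf n r b))"
  unfolding winner_pmf_def using finite_winners by auto

lemma pmf_winner_pmf_Some:
  "pmf (winner_pmf n r b) (Some j) = (if j \<in> winners n r b then 1 / card (winners n r b) else 0)"
  using finite_winners[of n r b] by (auto simp: winner_pmf_def pmf_map_inj')

lemma finite_set_pmf_play: "finite (set_pmf (play n \<alpha> \<rho> rL rH i v \<sigma> w k flag h))"
  by (induction k arbitrary: flag h)
     (simp_all add: Let_def finite_set_pmf_part_pmf finite_set_pmf_winner_pmf)

locale threshold_agent =
  fixes n :: nat and \<alpha> :: "nat \<Rightarrow> real" and \<rho> rL rH :: real and i :: nat and v :: real
  assumes agent_in_range: "i < n"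
begin

definition bid_profile :: "real \<Rightarrow> (nat \<Rightarrow> bool) \<Rightarrow> (nat \<Rightarrow> real) \<Rightarrow> nat \<Rightarrow> real option" where
  "bid_profile x P w = (\<lambda>j. if P j then Some (if j = i then x else w j) else None)"

definition active_rivals :: "(nat \<Rightarrow> bool) \<Rightarrow> nat set" where
  "active_rivals P = {k. k < n \<and> P k \<and> k \<noteq> i}"

definition critical_bid :: "real \<Rightarrow> (nat \<Rightarrow> bool) \<Rightarrow> (nat \<Rightarrow> real) \<Rightarrow> real" where
  "critical_bid r P w = Max (insert r (w ` active_rivals P))"

definition truthful_gain :: "real \<Rightarrow> (nat \<Rightarrow> bool) \<Rightarrow> (nat \<Rightarrow> real) \<Rightarrow> real" where
  "truthful_gain r P w = (if P i then max 0 (v - critical_bid r P w) else 0)"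

definition round_utility :: "real \<Rightarrow> (nat \<Rightarrow> real option) \<Rightarrow> nat option \<Rightarrow> real" where
  "round_utility r b win = (if win = Some i then v - price n r b i else 0)"

lemma finite_active_rivals: "finite (active_rivals P)"
  by (rule finite_subset[of _ "{..<n}"]) (auto simp: active_rivals_def)

lemma price_bid_profile: "price n r (bid_profile x P w) i = critical_bid r P w"
proof -
  have "{the (bid_profile x P w k) |k. k \<in> bidders n (bid_profile x P w) \<and> k \<noteq> i} = w ` active_rivals P"
    by (auto simp: bid_profile_def bidders_def active_rivals_def)
  then show ?thesis by (simp add: price_def critical_bid_def)
qed

lemma critical_bid_ge_reserve: "r \<le> critical_bid r P w"
  unfolding critical_bid_def by (simp add: finite_active_rivals)

lemma critical_bid_ge_rival: "k \<in> active_rivals P \<Longrightarrow> w k \<le> critical_bid r P w"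
  unfolding critical_bid_def by (simp add: finite_active_rivals)

lemma critical_bid_mono: "r \<le> r' \<Longrightarrow> critical_bid r P w \<le> critical_bid r' P w"
  unfolding critical_bid_def by (auto simp: finite_active_rivals intro: order.trans[OF _ Max_ge])

lemma critical_bid_le_winning_bid:
  assumes "i \<in> winners n r (bid_profile x P w)"
  shows "critical_bid r P w \<le> x"
  using assms unfolding critical_bid_def
  by (auto simp: finite_active_rivals winners_def bidders_def bid_profile_def active_rivals_def split: if_splits)

lemma winners_bid_profile_above_critical:
  assumes "P i" and "critical_bid r P w < x"
  shows "winners n r (bid_profile x P w) = {i}"
proof -
  have rival_below: "w k < x" if "k \<in> active_rivals P" for k
    using critical_bid_ge_rival[OF that, of w r] assms(2) by simp
  have "r < x"
    using critical_bid_ge_reserve[of r P w] assms(2) by simp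
  then show ?thesis
    using assms(1) agent_in_range rival_below
    by (force simp: winners_def bidders_def bid_profile_def active_rivals_def)
qed

lemma not_participant_not_winner: "\<not> P i \<Longrightarrow> i \<notin> winners n r (bid_profile x P w)"
  by (simp add: winners_def bidders_def bid_profile_def)

lemma expected_round_utility:
  "measure_pmf.expectation (winner_pmf n r (bid_profile x P w)) (round_utility r (bid_profile x P w))
     = pmf (winner_pmf n r (bid_profile x P w)) (Some i) * (v - critical_bid r P w)"
  by (subst integral_measure_pmf_real[where A="{Some i}"])
     (auto simp: round_utility_def price_bid_profile split: if_splits)

lemma expected_round_utility_le_gain:
  "measure_pmf.expectation (winner_pmf n r (bid_profile x P w)) (round_utility r (bid_profile x P w))
     \<le> truthful_gain r P w"
proof (cases "P i")
  case True
  let ?p = "pmf (winner_pmf n r (bid_profile x P w)) (Some i)"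
  have "?p * (v - critical_bid r P w) \<le> max 0 (v - critical_bid r P w)"
    using pmf_nonneg[of _ "Some i"] pmf_le_1[of _ "Some i"]
    by (cases "0 \<le> v - critical_bid r P w") (auto intro: mult_left_le_one_le mult_nonneg_nonpos)
  then show ?thesis
    using True by (simp add: expected_round_utility truthful_gain_def)
next
  case False
  then show ?thesis
    by (simp add: expected_round_utility truthful_gain_def pmf_winner_pmf_Some not_participant_not_winner)
qed

lemma expected_round_utility_truthful:
  "measure_pmf.expectation (winner_pmf n r (bid_profile v P w)) (round_utility r (bid_profile v P w))
     = truthful_gain r P w"
proof -
  consider "\<not> P i" | "P i" "critical_bid r P w < v"
    | "i \<in> winners n r (bid_profile v P w)" "v \<le> critical_bid r P w"
    | "i \<notin> winners n r (bid_profile v P w)" "v \<le> critical_bid r P w"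
    by fastforce
  then show ?thesis
  proof cases
    case 3
    then have "critical_bid r P w = v"
      using critical_bid_le_winning_bid by (meson order_antisym)
    then show ?thesis by (simp add: expected_round_utility truthful_gain_def)
  qed (simp_all add: expected_round_utility truthful_gain_def pmf_winner_pmf_Some
         not_participant_not_winner winners_bid_profile_above_critical)
qed

definition reserve :: "bool \<Rightarrow> real" where
  "reserve flag = (if flag then rH else rL)"

definition observation :: "real \<Rightarrow> real \<Rightarrow> (nat \<Rightarrow> bool) \<Rightarrow> (nat \<Rightarrow> real) \<Rightarrow> nat option \<Rightarrow> obs" where
  "observation r x P w win = Obs r (P i) (bid_profile x P w i) (win = Some i)
     (if win = Some i then price n r (bid_profile x P w) i else 0)"

abbreviation play_value :: "strategy \<Rightarrow> (nat \<Rightarrow> real) \<Rightarrow> nat \<Rightarrow> bool \<Rightarrow> obs list \<Rightarrow> real" where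
  "play_value \<sigma> w k flag h \<equiv> measure_pmf.expectation (play n \<alpha> \<rho> rL rH i v \<sigma> w k flag h) (\<lambda>u. u)"

lemma play_value_Suc:
  "play_value \<sigma> w (Suc k) flag h =
     measure_pmf.expectation (part_pmf n \<alpha>) (\<lambda>P.
       let r = reserve flag; x = \<sigma> v h r; b = bid_profile x P w in
       measure_pmf.expectation (winner_pmf n r b) (\<lambda>win.
         round_utility r b win + play_value \<sigma> w k (flag \<or> above n \<rho> b) (h @ [observation r x P w win])))"
  unfolding play.simps Let_def reserve_def bid_profile_def round_utility_def observation_def
  by (simp only: expectation_bind_pmf_finite expectation_shift_pmf set_map_pmf finite_imageI
      finite_set_pmf_bind_pmf finite_set_pmf_part_pmf finite_set_pmf_winner_pmf finite_set_pmf_play)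
     (intro Bochner_Integration.integral_cong refl arg_cong2[where f="(+)"]; simp)

primrec truthful_value :: "nat \<Rightarrow> bool \<Rightarrow> (nat \<Rightarrow> real) \<Rightarrow> real" where
  "truthful_value 0 flag w = 0"
| "truthful_value (Suc k) flag w = measure_pmf.expectation (part_pmf n \<alpha>) (\<lambda>P.
     truthful_gain (reserve flag) P w + truthful_value k (flag \<or> above n \<rho> (bid_profile v P w)) w)"

text \<open>The only property of the rivals' valuations that the induction over rounds needs.\<close>

definition truthful_trigger_optimal :: "(nat \<Rightarrow> real) \<Rightarrow> bool" where
  "truthful_trigger_optimal w \<longleftrightarrow> (\<forall>k flag P x. P \<in> set_pmf (part_pmf n \<alpha>) \<longrightarrow>
     truthful_value k (flag \<or> above n \<rho> (bid_profile x P w)) w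
       \<le> truthful_value k (flag \<or> above n \<rho> (bid_profile v P w)) w)"

lemma play_value_truthful: "play_value truthful w k flag h = truthful_value k flag w"
proof (induction k arbitrary: flag h)
  case (Suc k)
  then show ?case
    by (simp only: play_value_Suc truthful_value.simps Let_def truthful_def expectation_add_const
        finite_set_pmf_winner_pmf expected_round_utility_truthful)
qed simp

lemma play_value_le_truthful_value:
  assumes "truthful_trigger_optimal w"
  shows "play_value \<sigma> w k flag h \<le> truthful_value k flag w"
proof (induction k arbitrary: flag h)
  case (Suc k)
  define r where "r = reserve flag"
  define x where "x = \<sigma> v h r"
  have round: "measure_pmf.expectation (winner_pmf n r (bid_profile x P w)) (\<lambda>win.
      round_utility r (bid_profile x P w) win +
      play_value \<sigma> w k (flag \<or> above n \<rho> (bid_profile x P w)) (h @ [observation r x P w win]))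
    \<le> truthful_gain r P w + truthful_value k (flag \<or> above n \<rho> (bid_profile v P w)) w"
    if "P \<in> set_pmf (part_pmf n \<alpha>)" for P
  proof -
    let ?b = "bid_profile x P w"
    have "measure_pmf.expectation (winner_pmf n r ?b) (\<lambda>win.
        round_utility r ?b win + play_value \<sigma> w k (flag \<or> above n \<rho> ?b) (h @ [observation r x P w win]))
      \<le> measure_pmf.expectation (winner_pmf n r ?b) (\<lambda>win.
        round_utility r ?b win + truthful_value k (flag \<or> above n \<rho> ?b) w)"
      by (intro integral_mono integrable_measure_pmf_finite finite_set_pmf_winner_pmf
          add_left_mono Suc.IH)
    also have "\<dots> = measure_pmf.expectation (winner_pmf n r ?b) (round_utility r ?b)
        + truthful_value k (flag \<or> above n \<rho> ?b) w"
      by (simp only: expectation_add_const finite_set_pmf_winner_pmf)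
    also have "\<dots> \<le> truthful_gain r P w + truthful_value k (flag \<or> above n \<rho> (bid_profile v P w)) w"
      using assms that unfolding truthful_trigger_optimal_def
      by (intro add_mono expected_round_utility_le_gain) blast
    finally show ?thesis .
  qed
  have "play_value \<sigma> w (Suc k) flag h \<le> measure_pmf.expectation (part_pmf n \<alpha>) (\<lambda>P.
      truthful_gain r P w + truthful_value k (flag \<or> above n \<rho> (bid_profile v P w)) w)"
    unfolding play_value_Suc Let_def r_def[symmetric] x_def[symmetric]
    by (intro integral_mono_AE integrable_measure_pmf_finite finite_set_pmf_part_pmf AE_pmfI round)
  then show ?case by (simp add: r_def)
qed simp

lemma truthful_value_True_le_False:
  assumes "rL \<le> rH" and "\<And>P. \<not> above n \<rho> (bid_profile v P w)"
  shows "truthful_value k True w \<le> truthful_value k False w"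
proof (induction k)
  case (Suc k)
  have "truthful_gain rH P w \<le> truthful_gain rL P w" for P
    using critical_bid_mono[OF assms(1), of P w] by (auto simp: truthful_gain_def)
  then show ?case
    using Suc assms(2)
    by (simp add: reserve_def, intro integral_mono integrable_measure_pmf_finite
        finite_set_pmf_part_pmf add_mono)
qed simp

lemma truthful_trigger_optimal_low_type:
  assumes "rL \<le> rH" and "v \<le> \<rho>" and "\<forall>j<n. j \<noteq> i \<longrightarrow> w j \<le> \<rho>"
  shows "truthful_trigger_optimal w"
proof -
  have "\<not> above n \<rho> (bid_profile v P w)" for P
    using assms(2,3) by (auto simp: above_def bidders_def bid_profile_def split: if_splits)
  moreover have "truthful_value k (flag \<or> X) w \<le> truthful_value k flag w"
    if "\<And>P. \<not> above n \<rho> (bid_profile v P w)" for k flag X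
    using truthful_value_True_le_False[OF assms(1) that] by (cases flag; cases X) simp_all
  ultimately show ?thesis
    by (simp add: truthful_trigger_optimal_def)
qed

lemma truthful_trigger_optimal_high_type:
  assumes "j < n" and "j \<noteq> i" and "\<alpha> j = 1" and "\<rho> < w j"
  shows "truthful_trigger_optimal w"
proof -
  have "above n \<rho> (bid_profile x P w)" if "P \<in> set_pmf (part_pmf n \<alpha>)" for x P
    using part_pmf_sure_participant[OF that assms(1,3)] assms
    by (force simp: above_def bidders_def bid_profile_def)
  then show ?thesis by (simp add: truthful_trigger_optimal_def)
qed

lemma AE_truthful_trigger_optimal_low_type:
  assumes "prob_space N" and "measure N S = 1" and "S \<subseteq> {..\<rho>}" and "rL \<le> rH" and "v \<le> \<rho>"
  shows "AE w in PiM ({..<n} - {i}) (\<lambda>_. N). truthful_trigger_optimal w"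
proof -
  have "AE w in PiM ({..<n} - {i}) (\<lambda>_. N). \<forall>j \<in> {..<n} - {i}. w j \<in> S"
    using assms(1,2) by (intro AE_PiM_all_in) simp_all
  then show ?thesis
  proof (rule eventually_mono)
    fix w
    assume "\<forall>j \<in> {..<n} - {i}. w j \<in> S"
    with assms(3) have "\<forall>j<n. j \<noteq> i \<longrightarrow> w j \<le> \<rho>" by auto
    with assms(4,5) show "truthful_trigger_optimal w"
      by (rule truthful_trigger_optimal_low_type)
  qed
qed

lemma AE_truthful_trigger_optimal_high_type:
  assumes "prob_space N" and "measure N S = 1" and "S \<subseteq> {\<rho><..}"
    and "j < n" and "j \<noteq> i" and "\<alpha> j = 1"
  shows "AE w in PiM ({..<n} - {i}) (\<lambda>_. N). truthful_trigger_optimal w"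
proof -
  have "AE w in PiM ({..<n} - {i}) (\<lambda>_. N). \<forall>k \<in> {..<n} - {i}. w k \<in> S"
    using assms(1,2) by (intro AE_PiM_all_in) simp_all
  then show ?thesis
  proof (rule eventually_mono)
    fix w
    assume "\<forall>k \<in> {..<n} - {i}. w k \<in> S"
    with assms(3-5) have "\<rho> < w j" by auto
    with assms(4-6) show "truthful_trigger_optimal w"
      by (intro truthful_trigger_optimal_high_type)
  qed
qed

lemma truthful_gain_nonneg: "0 \<le> truthful_gain r P w"
  by (simp add: truthful_gain_def)

lemma truthful_gain_le: "truthful_gain (reserve flag) P w \<le> \<bar>v\<bar> + \<bar>rL\<bar> + \<bar>rH\<bar>"
  using critical_bid_ge_reserve[of "reserve flag" P w]
  by (auto simp: truthful_gain_def reserve_def)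

lemma truthful_value_nonneg: "0 \<le> truthful_value k flag w"
  by (induction k arbitrary: flag) (simp_all add: integral_nonneg_AE truthful_gain_nonneg)

lemma truthful_value_le: "truthful_value k flag w \<le> k * (\<bar>v\<bar> + \<bar>rL\<bar> + \<bar>rH\<bar>)"
proof (induction k arbitrary: flag)
  case (Suc k)
  let ?B = "\<bar>v\<bar> + \<bar>rL\<bar> + \<bar>rH\<bar>"
  have "truthful_value (Suc k) flag w \<le> measure_pmf.expectation (part_pmf n \<alpha>) (\<lambda>P. ?B + k * ?B)"
    unfolding truthful_value.simps using Suc.IH
    by (intro integral_mono integrable_measure_pmf_finite finite_set_pmf_part_pmf
        add_mono truthful_gain_le)
  then show ?case by (simp add: algebra_simps)
qed simp

lemma above_bid_profile_truthful:
  "above n \<rho> (bid_profile v P w) \<longleftrightarrow> (P i \<and> \<rho> < v) \<or> (\<exists>j\<in>active_rivals P. \<rho> < w j)"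
  using agent_in_range by (auto simp: above_def bidders_def bid_profile_def active_rivals_def split: if_splits)

lemma borel_measurable_truthful_value:
  assumes rival_measurable: "\<And>j. j < n \<Longrightarrow> j \<noteq> i \<Longrightarrow> (\<lambda>w. w j) \<in> borel_measurable M"
  shows "(\<lambda>w. truthful_value k flag w) \<in> borel_measurable M"
proof (induction k arbitrary: flag)
  case 0
  have "truthful_value 0 flag = (\<lambda>_. 0)" by (rule ext) simp
  then show ?case by simp
next
  case (Suc k)
  have active_rival_measurable: "(\<lambda>w. w j) \<in> borel_measurable M" if "j \<in> active_rivals P" for j P
    using that rival_measurable by (simp add: active_rivals_def)
  have gain: "(\<lambda>w. truthful_gain r P w) \<in> borel_measurable M" for r P
    unfolding truthful_gain_def critical_bid_def
    using borel_measurable_Max_insert[OF finite_active_rivals active_rival_measurable] by simp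
  have trigger: "{w \<in> space M. above n \<rho> (bid_profile v P w)} \<in> sets M" for P
    unfolding above_bid_profile_truthful using finite_active_rivals active_rival_measurable
    by (auto intro!: borel_measurable_less)
  have "truthful_value (Suc k) flag w = (\<Sum>P\<in>set_pmf (part_pmf n \<alpha>).
      (truthful_gain (reserve flag) P w + (if above n \<rho> (bid_profile v P w)
         then truthful_value k True w else truthful_value k flag w)) * pmf (part_pmf n \<alpha>) P)" for w
    by (simp add: integral_measure_pmf_real[OF finite_set_pmf_part_pmf]) (intro sum.cong refl; simp)
  then show ?case
    by (simp only:) (intro borel_measurable_sum borel_measurable_times borel_measurable_add
        gain measurable_If Suc.IH trigger borel_measurable_const)
qed

lemma truthful_best_responseI:
  assumes "prob_space (F s)" and "sets (F s) = sets borel"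
    and "AE w in PiM ({..<n} - {i}) (\<lambda>_. F s). truthful_trigger_optimal w"
  shows "best_response n \<alpha> F s T \<rho> rL rH i v truthful"
proof -
  let ?M = "PiM ({..<n} - {i}) (\<lambda>_. F s)"
  interpret prob_space ?M
    using assms(1) by (intro prob_space_PiM) auto
  have "(\<lambda>w. w j) \<in> borel_measurable ?M" if "j < n" "j \<noteq> i" for j
  proof -
    have "(\<lambda>w. w j) \<in> ?M \<rightarrow>\<^sub>M F s"
      using that by (intro measurable_component_singleton) simp
    moreover have "?M \<rightarrow>\<^sub>M F s = borel_measurable ?M"
      using assms(2) by (intro measurable_cong_sets) simp_all
    ultimately show ?thesis by simp
  qed
  then have "integrable ?M (\<lambda>w. truthful_value T False w)"
    by (intro integrable_const_bound[where B="T * (\<bar>v\<bar> + \<bar>rL\<bar> + \<bar>rH\<bar>)"] AE_I2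
        borel_measurable_truthful_value) (simp_all add: truthful_value_nonneg truthful_value_le)
  \<comment> \<open>A deviation need not have an integrable utility; its integral is then 0, which is
    still below the integral of the nonnegative truthful value.\<close>
  then have "exp_util n \<alpha> F s T \<rho> rL rH i v \<sigma> \<le> exp_util n \<alpha> F s T \<rho> rL rH i v truthful" for \<sigma>
    unfolding exp_util_def play_value_truthful
    using assms(3) play_value_le_truthful_value
    by (intro integral_mono_AE') (auto intro: truthful_value_nonneg)
  then show ?thesis
    by (simp add: best_response_def)
qed

end

theorem proposition1:
  fixes n T :: nat and \<alpha> :: "nat \<Rightarrow> real" and F :: "itype \<Rightarrow> real measure"
    and Lbar Hlow rL rH \<rho> :: real
  assumes T: "T > 1"
    and alpha: "\<forall>j<n. 0 \<le> \<alpha> j \<and> \<alpha> j \<le> 1"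
    and two: "card {j. j < n \<and> \<alpha> j = 1} \<ge> 2"
    and probF: "\<forall>s. prob_space (F s)"
    and setsF: "\<forall>s. sets (F s) = sets borel"
    and suppL: "measure (F L) {0..<Lbar} = 1"
    and suppH: "measure (F H) {Hlow..} = 1"
    and LH: "Lbar < Hlow"
    and r: "rL < rH"
    and rho: "Lbar < \<rho>" "\<rho> < Hlow"
  shows "\<forall>i<n. \<forall>s. \<forall>v \<in> support_of (F s).
           best_response n \<alpha> F s T \<rho> rL rH i v truthful"
proof (intro allI impI ballI)
  fix i s v
  assume "i < n" and v: "v \<in> support_of (F s)"
  then interpret threshold_agent n \<alpha> \<rho> rL rH i v
    by unfold_locales
  have "AE w in PiM ({..<n} - {i}) (\<lambda>_. F s). truthful_trigger_optimal w"
  proof (cases s)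
    case L
    have "v \<le> Lbar"
      using probF setsF suppL v L by (intro support_of_le[of "F L" "{0..<Lbar}"]) auto
    with L probF suppL r rho show ?thesis
      by (intro AE_truthful_trigger_optimal_low_type[where S="{0..<Lbar}"]) auto
  next
    case H
    obtain j where "j \<in> {j. j < n \<and> \<alpha> j = 1}" and "j \<noteq> i"
      using ex_neq_if_card_ge_2[OF two] by blast
    with H probF suppH rho show ?thesis
      by (intro AE_truthful_trigger_optimal_high_type[where S="{Hlow..}"]) auto
  qed
  then show "best_response n \<alpha> F s T \<rho> rL rH i v truthful"
    using probF setsF by (intro truthful_best_responseI) auto
qed

end
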